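(* In the setting described in the context, assume that (1) $\nu_x>0$ for every $x\in\mathcal X$ with $\alpha_x>0$; (2) $P_{\rm all}(W,x)>0$ whenever $W^x<\alpha_x$; (3) $\sum_{x\in D}\alpha_x\le\sum_{y\in N(D)}\beta_y$ for all $D\subseteq\mathcal X$, where $N(D)=\bigcup_{x\in D}N_x$. Then, from any initial partial allocation state, with probability $1$ the Markov process $W(t)$ enters the set $\mathcal W$ of allocation states after a finite number of jumps.
   Context: $\mathcal X$ is a finite set of units, $\mathcal G=(\mathcal X,\mathcal E)$ a directed graph, $N_x=\{y:(x,y)\in\mathcal E\}$, and $\alpha_x,\beta_x$ non-negative integers. A partial allocation state is a matrix $W\in\mathbb N^{\mathcal X\times\mathcal X}$ with $W_{xy}=0$ whenever $(x,y)\notin\mathcal E$, $W^x:=\sum_yW_{xy}\le\alpha_x$ and $W_y:=\sum_xW_{xy}\le\beta_y$; it is an allocation state if $W^x=\alpha_x$ for all $x$. $\mathcal W_p$ and $\mathcal W$ denote the sets of partial allocation states and allocation states; $e_{xy}$ is the matrix with $1$ in entry $(x,y)$ and $0$ elsewhere. Fix reals $\lambda_y$, parameters $k_c,k_a\ge0$, $\gamma>0$, and set $f_{xy}(W)=\lambda_y-k_cW_y/\beta_y+k_aW_{xy}$. Let $\mathcal X^x(W)=\{y\in N_x: W_y<\beta_y\}$ and define the Gibbs distribution on $\mathcal X^x(W)$ by $p_y(W,x)=e^{\gamma f_{xy}(W+e_{xy})}/\sum_{y'\in\mathcal X^x(W)}e^{\gamma f_{xy'}(W+e_{xy'})}$.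 For each unit $x$ and state $W$ let $P_{\rm all}(W,x),P_{\rm dis}(W,x)\ge0$ with $P_{\rm all}+P_{\rm dis}=1$, $P_{\rm all}(W,x)=0$ if $W^x=\alpha_x$, $P_{\rm dis}(W,x)=0$ if $W^x=0$. The process $W(t)$ on $\mathcal W_p$ is the continuous-time Markov process in which each unit $x$ activates according to an independent Poisson clock of rate $\nu_x\ge0$; when $x$ activates in state $W$: with probability $P_{\rm all}(W,x)$ it performs an allocation move, choosing $y^*\in\mathcal X^x(W)$ with probability $p_{y^*}(W,x)$ and passing to $W+e_{xy^*}$ (no action is possible if $\mathcal X^x(W)=\emptyset$); with probability $P_{\rm dis}(W,x)$ it performs a distribution move, choosing $\bar y$ with probability $W_{x\bar y}/W^x$, then $y^*\in\mathcal X^x(W-e_{x\bar y})$ with probability $p_{y^*}(W-e_{x\bar y},x)$, and passing to $W-e_{x\bar y}+e_{xy^*}$. *)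

theory Defs
  imports "HOL-Probability.Probability"
begin

text \<open>Allocation matrices are functions W :: 'x \<Rightarrow> 'x \<Rightarrow> nat (W x y = W_xy).
  The unit set is a finite set X, the graph has edge set E \<subseteq> X \<times> X.\<close>

type_synonym 'x mat = "'x \<Rightarrow> 'x \<Rightarrow> nat"

definition row_sum :: "'x set \<Rightarrow> 'x mat \<Rightarrow> 'x \<Rightarrow> nat" where
  "row_sum X W x = (\<Sum>y\<in>X. W x y)"

definition col_sum :: "'x set \<Rightarrow> 'x mat \<Rightarrow> 'x \<Rightarrow> nat" where
  "col_sum X W y = (\<Sum>x\<in>X. W x y)"

definition unit_mat :: "'x \<Rightarrow> 'x \<Rightarrow> 'x mat" where
  "unit_mat x y = (\<lambda>a b. if a = x \<and> b = y then 1 else 0)"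

definition mat_add :: "'x mat \<Rightarrow> 'x mat \<Rightarrow> 'x mat" where
  "mat_add A B = (\<lambda>a b. A a b + B a b)"

definition mat_sub :: "'x mat \<Rightarrow> 'x mat \<Rightarrow> 'x mat" where
  "mat_sub A B = (\<lambda>a b. A a b - B a b)"

definition partial_states ::
  "'x set \<Rightarrow> ('x \<times> 'x) set \<Rightarrow> ('x \<Rightarrow> nat) \<Rightarrow> ('x \<Rightarrow> nat) \<Rightarrow> 'x mat set" where
  "partial_states X E \<alpha> \<beta> =
     {W. (\<forall>x y. (x, y) \<notin> E \<longrightarrow> W x y = 0)
       \<and> (\<forall>x\<in>X. row_sum X W x \<le> \<alpha> x)
       \<and> (\<forall>y\<in>X. col_sum X W y \<le> \<beta> y)}"

definition alloc_states ::
  "'x set \<Rightarrow> ('x \<times> 'x) set \<Rightarrow> ('x \<Rightarrow> nat) \<Rightarrow> ('x \<Rightarrow> nat) \<Rightarrow> 'x mat set" where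
  "alloc_states X E \<alpha> \<beta> =
     {W \<in> partial_states X E \<alpha> \<beta>. \<forall>x\<in>X. row_sum X W x = \<alpha> x}"

definition nbhd :: "('x \<times> 'x) set \<Rightarrow> 'x set \<Rightarrow> 'x set" where
  "nbhd E D = {y. \<exists>x\<in>D. (x, y) \<in> E}"

definition avail :: "'x set \<Rightarrow> ('x \<times> 'x) set \<Rightarrow> ('x \<Rightarrow> nat) \<Rightarrow> 'x mat \<Rightarrow> 'x \<Rightarrow> 'x set" where
  "avail X E \<beta> W x = {y. (x, y) \<in> E \<and> col_sum X W y < \<beta> y}"

definition fit :: "'x set \<Rightarrow> ('x \<Rightarrow> nat) \<Rightarrow> ('x \<Rightarrow> real) \<Rightarrow> real \<Rightarrow> real \<Rightarrow> 'x mat \<Rightarrow> 'x \<Rightarrow> 'x \<Rightarrow> real" where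
  "fit X \<beta> lam kc ka W x y =
     lam y - kc * real (col_sum X W y) / real (\<beta> y) + ka * real (W x y)"

definition gibbs ::
  "'x set \<Rightarrow> ('x \<times> 'x) set \<Rightarrow> ('x \<Rightarrow> nat) \<Rightarrow> ('x \<Rightarrow> real) \<Rightarrow> real \<Rightarrow> real \<Rightarrow> real
   \<Rightarrow> 'x mat \<Rightarrow> 'x \<Rightarrow> 'x pmf" where
  "gibbs X E \<beta> lam kc ka \<gamma> W x =
     embed_pmf (\<lambda>y. if y \<in> avail X E \<beta> W x then
        exp (\<gamma> * fit X \<beta> lam kc ka (mat_add W (unit_mat x y)) x y) /
        (\<Sum>y'\<in>avail X E \<beta> W x. exp (\<gamma> * fit X \<beta> lam kc ka (mat_add W (unit_mat x y')) x y'))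
      else 0)"

definition alloc_move ::
  "'x set \<Rightarrow> ('x \<times> 'x) set \<Rightarrow> ('x \<Rightarrow> nat) \<Rightarrow> ('x \<Rightarrow> real) \<Rightarrow> real \<Rightarrow> real \<Rightarrow> real
   \<Rightarrow> 'x mat \<Rightarrow> 'x \<Rightarrow> 'x mat pmf" where
  "alloc_move X E \<beta> lam kc ka \<gamma> W x =
     (if avail X E \<beta> W x = {} then return_pmf W
      else map_pmf (\<lambda>y. mat_add W (unit_mat x y)) (gibbs X E \<beta> lam kc ka \<gamma> W x))"

definition dist_move ::
  "'x set \<Rightarrow> ('x \<times> 'x) set \<Rightarrow> ('x \<Rightarrow> nat) \<Rightarrow> ('x \<Rightarrow> real) \<Rightarrow> real \<Rightarrow> real \<Rightarrow> real
   \<Rightarrow> 'x mat \<Rightarrow> 'x \<Rightarrow> 'x mat pmf" where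
  "dist_move X E \<beta> lam kc ka \<gamma> W x =
     bind_pmf (embed_pmf (\<lambda>yb. real (W x yb) / real (row_sum X W x)))
       (\<lambda>yb. let W' = mat_sub W (unit_mat x yb) in
              if avail X E \<beta> W' x = {} then return_pmf W
              else map_pmf (\<lambda>y. mat_add W' (unit_mat x y)) (gibbs X E \<beta> lam kc ka \<gamma> W' x))"

definition activation ::
  "'x set \<Rightarrow> ('x \<times> 'x) set \<Rightarrow> ('x \<Rightarrow> nat) \<Rightarrow> ('x \<Rightarrow> real) \<Rightarrow> real \<Rightarrow> real \<Rightarrow> real
   \<Rightarrow> ('x mat \<Rightarrow> 'x \<Rightarrow> real) \<Rightarrow> 'x mat \<Rightarrow> 'x \<Rightarrow> 'x mat pmf" where
  "activation X E \<beta> lam kc ka \<gamma> Pall W x =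
     bind_pmf (bernoulli_pmf (Pall W x))
       (\<lambda>b. if b then alloc_move X E \<beta> lam kc ka \<gamma> W x
            else dist_move X E \<beta> lam kc ka \<gamma> W x)"

text \<open>Embedded (uniformized) chain of activations of the continuous-time process:
  the next activating unit is x with probability \<nu>_x / \<Sum>\<nu> (independent Poisson clocks).\<close>
definition step ::
  "'x set \<Rightarrow> ('x \<times> 'x) set \<Rightarrow> ('x \<Rightarrow> nat) \<Rightarrow> ('x \<Rightarrow> real) \<Rightarrow> real \<Rightarrow> real \<Rightarrow> real
   \<Rightarrow> ('x mat \<Rightarrow> 'x \<Rightarrow> real) \<Rightarrow> ('x \<Rightarrow> real) \<Rightarrow> 'x mat \<Rightarrow> 'x mat pmf" where
  "step X E \<beta> lam kc ka \<gamma> Pall \<nu> W =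
     (if (\<Sum>x\<in>X. \<nu> x) = 0 then return_pmf W
      else bind_pmf (embed_pmf (\<lambda>x. if x \<in> X then \<nu> x / (\<Sum>x'\<in>X. \<nu> x') else 0))
             (activation X E \<beta> lam kc ka \<gamma> Pall W))"

text \<open>Distribution after n activations of the chain stopped upon entering the set A.
  The probability that it lies in A is P(the chain hits A within n activations).\<close>
fun stopped_dist :: "('s \<Rightarrow> 's pmf) \<Rightarrow> 's set \<Rightarrow> 's \<Rightarrow> nat \<Rightarrow> 's pmf" where
  "stopped_dist K A s0 0 = return_pmf s0"
| "stopped_dist K A s0 (Suc n) =
     bind_pmf (stopped_dist K A s0 n) (\<lambda>s. if s \<in> A then return_pmf s else K s)"

end

theory Submission
  imports Defs
begin

text \<open>Only the supports of the transition laws matter: the Gibbs weights are positive. The partial allocation states form a finite set that the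
  chain never leaves, so it suffices that from every partial state an allocation state can be
  reached by transitions of positive probability; then the chain is absorbed with a uniformly
  positive probability within a fixed number of steps, and the probability of not yet being
  absorbed decays geometrically. Reachability is an augmenting path argument: by Hall's condition
  every unsaturated unit starts an alternating path ending at free capacity; distribution moves
  shorten a shortest such path one step at a time, and an allocation move at its end lowers the
  total deficit \<open>\<Sum>\<^sub>x (\<alpha>\<^sub>x - W\<^sup>x)\<close>.\<close>

lemma measure_pmf_prob_bind:
  "measure_pmf.prob (bind_pmf M N) B = (\<integral>x. measure_pmf.prob (N x) B \<partial>measure_pmf M)"
  unfolding measure_pmf_bind
  by (rule measure_pmf.measure_bind[where N="count_space UNIV"])
    (auto simp: space_subprob_algebra intro: prob_space_imp_subprob_space prob_space_measure_pmf)

lemma pmf_times_le_integral: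
  fixes g :: "'a \<Rightarrow> real"
  assumes "\<And>x. 0 \<le> g x" "\<And>x. g x \<le> 1"
  shows "pmf p u * g u \<le> (\<integral>x. g x \<partial>measure_pmf p)"
proof -
  have "pmf p u * g u = (\<integral>x. indicator {u} x * g u \<partial>measure_pmf p)"
    by (simp add: measure_pmf_single)
  also have "\<dots> \<le> (\<integral>x. g x \<partial>measure_pmf p)"
    by (intro integral_mono measure_pmf.integrable_const_bound[where B=1])
      (auto simp: assms split: split_indicator)
  finally show ?thesis .
qed

definition stopped_kernel :: "('s \<Rightarrow> 's pmf) \<Rightarrow> 's set \<Rightarrow> 's \<Rightarrow> 's pmf" where
  "stopped_kernel K A s = (if s \<in> A then return_pmf s else K s)"

lemma stopped_dist_Suc_right:
  "stopped_dist K A s (Suc n) = bind_pmf (stopped_dist K A s n) (stopped_kernel K A)"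
  by (simp add: stopped_kernel_def [abs_def])

declare stopped_dist.simps(2) [simp del]

lemma stopped_dist_add:
  "stopped_dist K A s (n + m) = bind_pmf (stopped_dist K A s n) (\<lambda>t. stopped_dist K A t m)"
  by (induction m) (simp_all add: bind_return_pmf' bind_assoc_pmf stopped_dist_Suc_right)

lemma stopped_dist_Suc_left:
  "stopped_dist K A s (Suc n) = bind_pmf (stopped_kernel K A s) (\<lambda>t. stopped_dist K A t n)"
  using stopped_dist_add[of K A s 1 n] by (simp add: stopped_dist_Suc_right bind_return_pmf)

lemma stopped_dist_absorbed: "s \<in> A \<Longrightarrow> stopped_dist K A s n = return_pmf s"
  by (induction n) (auto simp: stopped_dist_Suc_right stopped_kernel_def bind_return_pmf)

lemma set_pmf_stopped_dist_subset:
  assumes "\<And>s. s \<in> S \<Longrightarrow> s \<notin> A \<Longrightarrow> set_pmf (K s) \<subseteq> S" and "s \<in> S"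
  shows "set_pmf (stopped_dist K A s n) \<subseteq> S"
  by (induction n)
    (use assms in \<open>fastforce simp: stopped_dist_Suc_right stopped_kernel_def split: if_splits\<close>)+

definition hitting_prob :: "('s \<Rightarrow> 's pmf) \<Rightarrow> 's set \<Rightarrow> 's \<Rightarrow> nat \<Rightarrow> real" where
  "hitting_prob K A s n = measure_pmf.prob (stopped_dist K A s n) A"

lemma hitting_prob_nonneg: "0 \<le> hitting_prob K A s n"
  and hitting_prob_le_1: "hitting_prob K A s n \<le> 1"
  by (simp_all add: hitting_prob_def)

lemma hitting_prob_absorbed: "s \<in> A \<Longrightarrow> hitting_prob K A s n = 1"
  by (simp add: hitting_prob_def stopped_dist_absorbed)

lemma hitting_prob_add:
  "hitting_prob K A s (n + m) = (\<integral>t. hitting_prob K A t m \<partial>measure_pmf (stopped_dist K A s n))"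
  by (simp add: hitting_prob_def stopped_dist_add measure_pmf_prob_bind)

lemma hitting_prob_Suc:
  "s \<notin> A \<Longrightarrow> hitting_prob K A s (Suc n) = (\<integral>t. hitting_prob K A t n \<partial>measure_pmf (K s))"
  by (simp add: hitting_prob_def stopped_dist_Suc_left stopped_kernel_def measure_pmf_prob_bind)

lemma mono_hitting_prob: "mono (hitting_prob K A s)"
  unfolding mono_iff_le_Suc
proof
  fix n
  have "hitting_prob K A s n = (\<integral>t. indicator A t \<partial>measure_pmf (stopped_dist K A s n))"
    by (simp add: hitting_prob_def)
  also have "\<dots> \<le> (\<integral>t. hitting_prob K A t 1 \<partial>measure_pmf (stopped_dist K A s n))"
    by (intro integral_mono measure_pmf.integrable_const_bound[where B=1])
      (auto simp: hitting_prob_absorbed hitting_prob_nonneg hitting_prob_le_1 split: split_indicator)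
  also have "\<dots> = hitting_prob K A s (Suc n)"
    using hitting_prob_add[of K A s n 1] by simp
  finally show "hitting_prob K A s n \<le> hitting_prob K A s (Suc n)" .
qed

definition transitions :: "('s \<Rightarrow> 's pmf) \<Rightarrow> 's set \<Rightarrow> 's set \<Rightarrow> ('s \<times> 's) set" where
  "transitions K S A = {(s, t). s \<in> S \<and> s \<notin> A \<and> t \<in> set_pmf (K s)}"

lemma hitting_prob_ge_path_prob:
  assumes c: "0 \<le> c" "\<And>s t. (s, t) \<in> transitions K S A \<Longrightarrow> c \<le> pmf (K s) t"
  shows "(s, t) \<in> transitions K S A ^^ n \<Longrightarrow> t \<in> A \<Longrightarrow> c ^ n \<le> hitting_prob K A s n"
proof (induction n arbitrary: s)
  case 0
  then show ?case by (simp add: hitting_prob_absorbed)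
next
  case (Suc n)
  from relpow_Suc_D2[OF Suc.prems(1)] obtain u
    where su: "(s, u) \<in> transitions K S A" and "(u, t) \<in> transitions K S A ^^ n"
    by blast
  then have "c ^ n \<le> hitting_prob K A u n" using Suc by blast
  then have "c * c ^ n \<le> pmf (K s) u * hitting_prob K A u n"
    using c su by (intro mult_mono) auto
  also have "\<dots> \<le> (\<integral>t. hitting_prob K A t n \<partial>measure_pmf (K s))"
    by (intro pmf_times_le_integral hitting_prob_nonneg hitting_prob_le_1)
  also have "\<dots> = hitting_prob K A s (Suc n)"
    using su by (simp add: hitting_prob_Suc transitions_def)
  finally show ?case by simp
qed

lemma hitting_prob_add_ge:
  assumes closed: "\<And>s. s \<in> S \<Longrightarrow> s \<notin> A \<Longrightarrow> set_pmf (K s) \<subseteq> S" and s0: "s0 \<in> S"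
    and q: "0 \<le> q" "q \<le> 1" and uniform: "\<And>s. s \<in> S \<Longrightarrow> q \<le> hitting_prob K A s N"
  shows "q + (1 - q) * hitting_prob K A s0 n \<le> hitting_prob K A s0 (n + N)"
proof -
  let ?\<mu> = "measure_pmf (stopped_dist K A s0 n)"
  have "integrable ?\<mu> (\<lambda>t. (1 - q) * indicator A t)"
    by (intro integrable_mult_right measure_pmf.integrable_const_bound[where B=1])
      (auto split: split_indicator)
  then have "q + (1 - q) * hitting_prob K A s0 n = (\<integral>t. q + (1 - q) * indicator A t \<partial>?\<mu>)"
    by (simp add: hitting_prob_def)
  also have "\<dots> \<le> (\<integral>t. hitting_prob K A t N \<partial>?\<mu>)"
  proof (rule integral_mono_AE)
    show "integrable ?\<mu> (\<lambda>t. q + (1 - q) * indicator A t)"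
      by (rule measure_pmf.integrable_const_bound[where B=1])
        (use q in \<open>auto split: split_indicator\<close>)
    show "integrable ?\<mu> (\<lambda>t. hitting_prob K A t N)"
      by (rule measure_pmf.integrable_const_bound[where B=1])
        (auto simp: hitting_prob_nonneg hitting_prob_le_1)
    show "AE t in ?\<mu>. q + (1 - q) * indicator A t \<le> hitting_prob K A t N"
      using set_pmf_stopped_dist_subset[where K=K and A=A and S=S, OF closed s0] uniform
      by (auto simp: AE_measure_pmf_iff hitting_prob_absorbed split: split_indicator)
  qed
  also have "\<dots> = hitting_prob K A s0 (n + N)"
    by (simp add: hitting_prob_add)
  finally show ?thesis .
qed

lemma hitting_prob_tendsto_1_if_uniform:
  assumes closed: "\<And>s. s \<in> S \<Longrightarrow> s \<notin> A \<Longrightarrow> set_pmf (K s) \<subseteq> S" and s0: "s0 \<in> S"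
    and q: "0 < q" and uniform: "\<And>s. s \<in> S \<Longrightarrow> q \<le> hitting_prob K A s N"
  shows "hitting_prob K A s0 \<longlonglongrightarrow> 1"
proof -
  let ?miss = "\<lambda>n. 1 - hitting_prob K A s0 n"
  have q_le_1: "q \<le> 1" using uniform[OF s0] hitting_prob_le_1[of K A s0 N] by linarith
  have miss_add: "?miss (n + N) \<le> (1 - q) * ?miss n" for n
    using hitting_prob_add_ge[OF closed s0 _ q_le_1 uniform, of n] q by (simp add: algebra_simps)
  have miss_geometric: "?miss (k * N) \<le> (1 - q) ^ k" for k
  proof (induction k)
    case (Suc k)
    have "?miss (Suc k * N) \<le> (1 - q) * ?miss (k * N)"
      using miss_add[of "k * N"] by (simp add: add.commute)
    also have "\<dots> \<le> (1 - q) * (1 - q) ^ k"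
      using Suc q_le_1 by (intro mult_left_mono) auto
    finally show ?case by simp
  qed (simp add: hitting_prob_nonneg)
  show ?thesis
  proof (rule LIMSEQ_I)
    fix r :: real assume "0 < r"
    then obtain k where k: "(1 - q) ^ k < r"
      using real_arch_pow_inv[of r "1 - q"] q by auto
    have "norm (hitting_prob K A s0 n - 1) < r" if "k * N \<le> n" for n
    proof -
      have "norm (hitting_prob K A s0 n - 1) = ?miss n"
        using hitting_prob_le_1[of K A s0 n] by simp
      also have "\<dots> \<le> ?miss (k * N)"
        using mono_hitting_prob[THEN monoD, OF that] by simp
      also have "\<dots> < r" using miss_geometric[of k] k by simp
      finally show ?thesis .
    qed
    then show "\<exists>n0. \<forall>n\<ge>n0. norm (hitting_prob K A s0 n - 1) < r" by blast
  qed
qed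

lemma hitting_prob_tendsto_1:
  assumes finite: "finite S" and s0: "s0 \<in> S"
    and closed: "\<And>s. s \<in> S \<Longrightarrow> s \<notin> A \<Longrightarrow> set_pmf (K s) \<subseteq> S"
    and reachable: "\<And>s. s \<in> S \<Longrightarrow> \<exists>t\<in>A. (s, t) \<in> (transitions K S A)\<^sup>*"
  shows "hitting_prob K A s0 \<longlonglongrightarrow> 1"
proof -
  let ?R = "transitions K S A"
  define c where "c = Min (insert 1 ((\<lambda>(s, t). pmf (K s) t) ` ?R))"
  have "?R \<subseteq> S \<times> S" using closed by (auto simp: transitions_def)
  then have finite_R: "finite ?R" using finite by (meson finite_SigmaI finite_subset)
  have c_pos: "0 < c" and c_le_1: "c \<le> 1"
    using finite_R by (auto simp: c_def transitions_def pmf_positive)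
  have c_le_pmf: "c \<le> pmf (K s) t" if "(s, t) \<in> ?R" for s t
    using finite_R that unfolding c_def by (intro Min_le) auto
  have "\<forall>s\<in>S. \<exists>n. \<exists>t\<in>A. (s, t) \<in> ?R ^^ n"
    using reachable by (meson rtrancl_power)
  then obtain len where len: "\<And>s. s \<in> S \<Longrightarrow> \<exists>t\<in>A. (s, t) \<in> ?R ^^ len s"
    by metis
  define N where "N = (\<Sum>s\<in>S. len s)"
  show ?thesis
  proof (rule hitting_prob_tendsto_1_if_uniform[OF closed s0])
    show "0 < c ^ N" using c_pos by simp
    fix s assume s: "s \<in> S"
    have len_le_N: "len s \<le> N" unfolding N_def using finite s by (intro member_le_sum) auto
    obtain t where "t \<in> A" "(s, t) \<in> ?R ^^ len s" using len[OF s] by blast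
    then have "c ^ len s \<le> hitting_prob K A s (len s)"
      using c_pos c_le_pmf by (intro hitting_prob_ge_path_prob) auto
    also have "\<dots> \<le> hitting_prob K A s N" using mono_hitting_prob len_le_N by (rule monoD)
    finally show "c ^ N \<le> hitting_prob K A s N"
      using power_decreasing[OF len_le_N] c_pos c_le_1 by (meson less_imp_le order_trans)
  qed
qed

lemma set_pmf_embed_pmf_finite:
  fixes g :: "'a \<Rightarrow> real"
  assumes "finite B" "\<And>x. 0 \<le> g x" "\<And>x. x \<notin> B \<Longrightarrow> g x = 0" "sum g B = 1"
  shows "set_pmf (embed_pmf g) = {x. g x \<noteq> 0}"
proof (rule set_embed_pmf)
  have "(\<integral>\<^sup>+x. ennreal (g x) \<partial>count_space UNIV) = (\<Sum>x\<in>B. ennreal (g x))"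
    by (rule nn_integral_count_space') (use assms in auto)
  also have "\<dots> = 1" using assms(2,4) by (simp add: sum_ennreal)
  finally show "(\<integral>\<^sup>+x. ennreal (g x) \<partial>count_space UNIV) = 1" .
qed (use assms in auto)

lemma set_pmf_bernoulli_pmf:
  "0 \<le> p \<Longrightarrow> p \<le> 1 \<Longrightarrow>
    set_pmf (bernoulli_pmf p) = (if 0 < p then {True} else {}) \<union> (if p < 1 then {False} else {})"
  by (simp add: set_eq_iff set_pmf_iff all_bool_eq)

lemma row_sum_add_unit:
  "finite X \<Longrightarrow> y \<in> X \<Longrightarrow>
    row_sum X (mat_add W (unit_mat x y)) a = row_sum X W a + (if a = x then 1 else 0)"
  by (simp add: row_sum_def mat_add_def unit_mat_def sum.distrib)

lemma col_sum_add_unit: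
  "finite X \<Longrightarrow> x \<in> X \<Longrightarrow>
    col_sum X (mat_add W (unit_mat x y)) b = col_sum X W b + (if b = y then 1 else 0)"
  by (simp add: col_sum_def mat_add_def unit_mat_def sum.distrib)

lemma mat_add_sub_unit: "0 < W x y \<Longrightarrow> mat_add (mat_sub W (unit_mat x y)) (unit_mat x y) = W"
  by (auto simp: fun_eq_iff mat_add_def mat_sub_def unit_mat_def)

lemma row_sum_sub_unit:
  "finite X \<Longrightarrow> y \<in> X \<Longrightarrow> 0 < W x y \<Longrightarrow>
    row_sum X (mat_sub W (unit_mat x y)) a + (if a = x then 1 else 0) = row_sum X W a"
  using row_sum_add_unit[of X y "mat_sub W (unit_mat x y)" x a] by (simp add: mat_add_sub_unit)

lemma col_sum_sub_unit:
  "finite X \<Longrightarrow> x \<in> X \<Longrightarrow> 0 < W x y \<Longrightarrow>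
    col_sum X (mat_sub W (unit_mat x y)) b + (if b = y then 1 else 0) = col_sum X W b"
  using col_sum_add_unit[of X x "mat_sub W (unit_mat x y)" y b] by (simp add: mat_add_sub_unit)

definition reassign :: "'x mat \<Rightarrow> 'x \<Rightarrow> 'x \<Rightarrow> 'x \<Rightarrow> 'x mat" where
  "reassign W x y y' = mat_add (mat_sub W (unit_mat x y)) (unit_mat x y')"

lemma reassign_other_row: "a \<noteq> x \<Longrightarrow> reassign W x y y' a b = W a b"
  by (simp add: reassign_def mat_add_def mat_sub_def unit_mat_def)

lemma row_sum_reassign:
  "finite X \<Longrightarrow> y \<in> X \<Longrightarrow> y' \<in> X \<Longrightarrow> 0 < W x y \<Longrightarrow> row_sum X (reassign W x y y') a = row_sum X W a"
  using row_sum_sub_unit[of X y W x a] by (simp add: reassign_def row_sum_add_unit)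

lemma col_sum_reassign:
  "finite X \<Longrightarrow> x \<in> X \<Longrightarrow> 0 < W x y \<Longrightarrow>
    col_sum X (reassign W x y y') b + (if b = y then 1 else 0) = col_sum X W b + (if b = y' then 1 else 0)"
  using col_sum_sub_unit[of X x W y b] by (simp add: reassign_def col_sum_add_unit)

locale capacity_graph =
  fixes X :: "'x set" and E :: "('x \<times> 'x) set" and \<alpha> \<beta> :: "'x \<Rightarrow> nat"
  assumes finite_units: "finite X" and edges: "E \<subseteq> X \<times> X"
begin

abbreviation "PS \<equiv> partial_states X E \<alpha> \<beta>"
abbreviation "AS \<equiv> alloc_states X E \<alpha> \<beta>"

lemma partial_state_edge: "W \<in> PS \<Longrightarrow> 0 < W a b \<Longrightarrow> (a, b) \<in> E"
  unfolding partial_states_def by (cases "(a, b) \<in> E") auto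

lemma partial_state_units: "W \<in> PS \<Longrightarrow> 0 < W a b \<Longrightarrow> a \<in> X \<and> b \<in> X"
  using partial_state_edge edges by blast

lemma partial_state_row_le: "W \<in> PS \<Longrightarrow> a \<in> X \<Longrightarrow> row_sum X W a \<le> \<alpha> a"
  unfolding partial_states_def by blast

lemma partial_state_col_le: "W \<in> PS \<Longrightarrow> b \<in> X \<Longrightarrow> col_sum X W b \<le> \<beta> b"
  unfolding partial_states_def by blast

lemma entry_le_row_sum: "b \<in> X \<Longrightarrow> W a b \<le> row_sum X W a"
  unfolding row_sum_def using finite_units by (intro member_le_sum) auto

lemma not_alloc_state_iff: "W \<in> PS \<Longrightarrow> W \<notin> AS \<longleftrightarrow> (\<exists>x\<in>X. row_sum X W x < \<alpha> x)"
  unfolding alloc_states_def using partial_state_row_le by (auto simp: order_less_le)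

lemma finite_partial_states: "finite PS"
proof -
  define M where "M = sum \<alpha> X"
  define rows where
    "rows = {r :: 'x \<Rightarrow> nat. \<forall>b. (b \<in> X \<longrightarrow> r b \<in> {0..M}) \<and> (b \<notin> X \<longrightarrow> r b = 0)}"
  define mats where
    "mats = {W :: 'x mat. \<forall>a. (a \<in> X \<longrightarrow> W a \<in> rows) \<and> (a \<notin> X \<longrightarrow> W a = (\<lambda>_. 0))}"
  have "finite rows"
    unfolding rows_def by (rule finite_set_of_finite_funs[OF finite_units]) simp
  then have "finite mats"
    unfolding mats_def by (rule finite_set_of_finite_funs[OF finite_units])
  moreover have "PS \<subseteq> mats"
    unfolding mats_def
  proof (intro subsetI CollectI allI conjI impI)
    fix W a assume W: "W \<in> PS"
    have zero: "W a b = 0" if "a \<notin> X \<or> b \<notin> X" for b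
      using partial_state_units[OF W, of a b] that by auto
    then show "a \<notin> X \<Longrightarrow> W a = (\<lambda>_. 0)" by auto
    assume a: "a \<in> X"
    have "W a b \<le> M" if "b \<in> X" for b
    proof -
      have "W a b \<le> \<alpha> a"
        using entry_le_row_sum[OF that, of W a] partial_state_row_le[OF W a] by linarith
      also have "\<dots> \<le> M" unfolding M_def using finite_units a by (intro member_le_sum) auto
      finally show ?thesis .
    qed
    then show "W a \<in> rows" unfolding rows_def using zero by auto
  qed
  ultimately show ?thesis by (rule finite_subset[rotated])
qed

lemma avail_subset: "avail X E \<beta> W x \<subseteq> X"
  unfolding avail_def using edges by auto

lemma add_unit_partial_state:
  assumes W: "W \<in> PS" and x: "x \<in> X" "row_sum X W x < \<alpha> x" and y: "y \<in> avail X E \<beta> W x"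
  shows "mat_add W (unit_mat x y) \<in> PS"
  unfolding partial_states_def
proof (intro CollectI conjI ballI allI impI)
  have y': "y \<in> X" "(x, y) \<in> E" "col_sum X W y < \<beta> y"
    using y avail_subset by (auto simp: avail_def)
  fix a b
  show "(a, b) \<notin> E \<Longrightarrow> mat_add W (unit_mat x y) a b = 0"
    using W y' unfolding partial_states_def by (auto simp: mat_add_def unit_mat_def)
  show "a \<in> X \<Longrightarrow> row_sum X (mat_add W (unit_mat x y)) a \<le> \<alpha> a"
    using partial_state_row_le[OF W, of a] x by (auto simp: row_sum_add_unit[OF finite_units y'(1)])
  show "b \<in> X \<Longrightarrow> col_sum X (mat_add W (unit_mat x y)) b \<le> \<beta> b"
    using partial_state_col_le[OF W, of b] y' by (auto simp: col_sum_add_unit[OF finite_units x(1)])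
qed

lemma sub_unit_partial_state:
  assumes W: "W \<in> PS" and pos: "0 < W x y"
  shows "mat_sub W (unit_mat x y) \<in> PS" and "row_sum X (mat_sub W (unit_mat x y)) x < \<alpha> x"
proof -
  have x: "x \<in> X" and y: "y \<in> X" using partial_state_units[OF W pos] by auto
  have row: "row_sum X (mat_sub W (unit_mat x y)) a \<le> row_sum X W a" for a
    using row_sum_sub_unit[of X y W x a, OF finite_units y pos] by linarith
  have col: "col_sum X (mat_sub W (unit_mat x y)) b \<le> col_sum X W b" for b
    using col_sum_sub_unit[of X x W y b, OF finite_units x pos] by linarith
  show "mat_sub W (unit_mat x y) \<in> PS"
    unfolding partial_states_def
  proof (intro CollectI conjI ballI allI impI)
    fix a b
    show "(a, b) \<notin> E \<Longrightarrow> mat_sub W (unit_mat x y) a b = 0"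
      using W unfolding partial_states_def by (simp add: mat_sub_def)
    show "a \<in> X \<Longrightarrow> row_sum X (mat_sub W (unit_mat x y)) a \<le> \<alpha> a"
      using row partial_state_row_le[OF W] le_trans by blast
    show "b \<in> X \<Longrightarrow> col_sum X (mat_sub W (unit_mat x y)) b \<le> \<beta> b"
      using col partial_state_col_le[OF W] le_trans by blast
  qed
  show "row_sum X (mat_sub W (unit_mat x y)) x < \<alpha> x"
    using row_sum_sub_unit[of X y W x x, OF finite_units y pos] partial_state_row_le[OF W x] by simp
qed

definition deficit :: "'x mat \<Rightarrow> nat" where
  "deficit W = (\<Sum>x\<in>X. \<alpha> x - row_sum X W x)"

lemma deficit_add_unit_less:
  assumes x: "x \<in> X" "row_sum X W x < \<alpha> x" and y: "y \<in> avail X E \<beta> W x"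
  shows "deficit (mat_add W (unit_mat x y)) < deficit W"
proof -
  have "y \<in> X" using y avail_subset by blast
  then show ?thesis
    unfolding deficit_def using x
    by (intro sum_strict_mono_ex1[OF finite_units]) (auto simp: row_sum_add_unit[OF finite_units])
qed

text \<open>\<open>augmenting W k x\<close>: unit \<open>x\<close> starts an alternating path
  \<open>x \<rightarrow> y\<^sub>1 \<leftarrow> x\<^sub>1 \<rightarrow> \<dots> \<rightarrow> y\<^sub>k \<leftarrow> x\<^sub>k\<close> along which each \<open>x\<^sub>i\<close> holds a unit of \<open>y\<^sub>i\<close>,
  and \<open>x\<^sub>k\<close> has a neighbour with free capacity.\<close>

fun augmenting :: "'x mat \<Rightarrow> nat \<Rightarrow> 'x \<Rightarrow> bool" where
  "augmenting W 0 x \<longleftrightarrow> x \<in> X \<and> avail X E \<beta> W x \<noteq> {}"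
| "augmenting W (Suc k) x \<longleftrightarrow> (\<exists>y x'. (x, y) \<in> E \<and> 0 < W x' y \<and> augmenting W k x')"

inductive_set alternating_reach :: "'x mat \<Rightarrow> 'x \<Rightarrow> 'x set" for W x0 where
  start: "x0 \<in> alternating_reach W x0"
| step: "x \<in> alternating_reach W x0 \<Longrightarrow> (x, y) \<in> E \<Longrightarrow> 0 < W x' y \<Longrightarrow> x' \<in> alternating_reach W x0"

lemma alternating_reach_subset: "W \<in> PS \<Longrightarrow> x0 \<in> X \<Longrightarrow> alternating_reach W x0 \<subseteq> X"
proof
  show "x \<in> alternating_reach W x0 \<Longrightarrow> W \<in> PS \<Longrightarrow> x0 \<in> X \<Longrightarrow> x \<in> X" for x
    by (induction rule: alternating_reach.induct) (auto dest: partial_state_units)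
qed

lemma augmenting_alternating_reach:
  "x \<in> alternating_reach W x0 \<Longrightarrow> augmenting W k x \<Longrightarrow> \<exists>k'. augmenting W k' x0"
proof (induction arbitrary: k rule: alternating_reach.induct)
  case (step x y x')
  then have "augmenting W (Suc k) x" by auto
  then show ?case by (rule step.IH)
qed blast

lemma saturated_nbhd_capacity_le_rows:
  assumes D: "D \<subseteq> X"
    and saturated: "\<And>y. y \<in> nbhd E D \<Longrightarrow> col_sum X W y = \<beta> y"
    and served_by_D: "\<And>x y. y \<in> nbhd E D \<Longrightarrow> x \<in> X - D \<Longrightarrow> W x y = 0"
  shows "(\<Sum>y\<in>nbhd E D. \<beta> y) \<le> (\<Sum>x\<in>D. row_sum X W x)"
proof -
  have N: "nbhd E D \<subseteq> X" unfolding nbhd_def using edges by auto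
  have "(\<Sum>y\<in>nbhd E D. \<beta> y) = (\<Sum>y\<in>nbhd E D. col_sum X W y)"
    using saturated by simp
  also have "\<dots> = (\<Sum>y\<in>nbhd E D. \<Sum>x\<in>D. W x y)"
    unfolding col_sum_def
    by (intro sum.cong refl sum.mono_neutral_right[OF finite_units D]) (use served_by_D in blast)
  also have "\<dots> = (\<Sum>x\<in>D. \<Sum>y\<in>nbhd E D. W x y)" by (rule sum.swap)
  also have "\<dots> \<le> (\<Sum>x\<in>D. row_sum X W x)"
    unfolding row_sum_def by (intro sum_mono sum_mono2[OF finite_units N]) auto
  finally show ?thesis .
qed

text \<open>Otherwise the units alternatingly reachable from \<open>x0\<close> would saturate their whole
  neighbourhood on their own while holding less than their total demand, against Hall's condition.\<close>

lemma augmenting_path_exists: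
  assumes hall: "\<forall>D\<subseteq>X. (\<Sum>x\<in>D. \<alpha> x) \<le> (\<Sum>y\<in>nbhd E D. \<beta> y)"
    and W: "W \<in> PS" and x0: "x0 \<in> X" "row_sum X W x0 < \<alpha> x0"
  shows "\<exists>k. augmenting W k x0"
proof (rule ccontr)
  assume no_path: "\<nexists>k. augmenting W k x0"
  define D where "D = alternating_reach W x0"
  have D: "D \<subseteq> X" unfolding D_def using alternating_reach_subset W x0(1) .
  have blocked: "avail X E \<beta> W x = {}" if "x \<in> D" for x
    using augmenting_alternating_reach[of x W x0 0] that D no_path by (auto simp: D_def)
  have "(\<Sum>y\<in>nbhd E D. \<beta> y) \<le> (\<Sum>x\<in>D. row_sum X W x)"
  proof (rule saturated_nbhd_capacity_le_rows[OF D])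
    fix y assume "y \<in> nbhd E D"
    then obtain x where x: "x \<in> D" "(x, y) \<in> E" unfolding nbhd_def by blast
    then have "y \<in> X" using edges by auto
    then show "col_sum X W y = \<beta> y"
      using blocked[OF x(1)] x(2) partial_state_col_le[OF W] by (force simp: avail_def)
    show "W x' y = 0" if "x' \<in> X - D" for x'
      using alternating_reach.step[of x W x0 y x'] x that by (auto simp: D_def)
  qed
  also have "\<dots> < (\<Sum>x\<in>D. \<alpha> x)"
    using partial_state_row_le[OF W] D x0 finite_subset[OF D finite_units]
    by (intro sum_strict_mono_ex1) (auto simp: D_def start)
  finally show False using hall D by (meson not_le)
qed

lemma augmenting_Suc_0_reassign:
  assumes W: "W \<in> PS" and path: "augmenting W (Suc 0) x" and not_free: "\<not> augmenting W 0 x"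
  shows "\<exists>z yb ys. augmenting W 0 z \<and> 0 < W z yb \<and> ys \<in> avail X E \<beta> (mat_sub W (unit_mat z yb)) z
            \<and> augmenting (reassign W z yb ys) 0 x"
proof -
  from path obtain y z where xy: "(x, y) \<in> E" and zy: "0 < W z y" and z: "augmenting W 0 z"
    by auto
  have x: "x \<in> X" and y: "y \<in> X" using xy edges by auto
  have "z \<in> X" using z by simp
  obtain ys where ys: "ys \<in> avail X E \<beta> W z" using z by auto
  have "col_sum X W y = \<beta> y"
    using not_free x xy partial_state_col_le[OF W y] by (force simp: avail_def)
  then have "ys \<noteq> y" using ys by (auto simp: avail_def)
  have "ys \<in> avail X E \<beta> (mat_sub W (unit_mat z y)) z"
    using ys col_sum_sub_unit[of X z W y ys, OF finite_units \<open>z \<in> X\<close> zy] \<open>ys \<noteq> y\<close>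
    by (simp add: avail_def)
  moreover have "y \<in> avail X E \<beta> (reassign W z y ys) x"
    using col_sum_reassign[of X z W y ys y, OF finite_units \<open>z \<in> X\<close> zy] \<open>ys \<noteq> y\<close>
      \<open>col_sum X W y = \<beta> y\<close> xy
    by (simp add: avail_def)
  ultimately show ?thesis using x z zy by auto
qed

text \<open>Relocating the unit held at the far end of a shortest alternating path onto a free
  neighbour frees a resource one step closer to the start of the path.\<close>

lemma augmenting_reassign_shorter:
  assumes W: "W \<in> PS"
  shows "augmenting W (Suc k) x \<Longrightarrow> \<forall>i\<le>k. \<not> augmenting W i x \<Longrightarrow>
    \<exists>z yb ys. augmenting W 0 z \<and> 0 < W z yb \<and> ys \<in> avail X E \<beta> (mat_sub W (unit_mat z yb)) z
       \<and> augmenting (reassign W z yb ys) k x"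
proof (induction k arbitrary: x)
  case 0
  then show ?case using augmenting_Suc_0_reassign[OF W] by blast
next
  case (Suc k)
  from Suc.prems(1) obtain y x' where xy: "(x, y) \<in> E" and x'y: "0 < W x' y"
    and x': "augmenting W (Suc k) x'" by auto
  have "\<not> augmenting W i x'" if "i \<le> k" for i
    using Suc.prems(2) that xy x'y by (metis Suc_le_mono augmenting.simps(2))
  then obtain z yb ys where z: "augmenting W 0 z" "0 < W z yb"
      "ys \<in> avail X E \<beta> (mat_sub W (unit_mat z yb)) z" "augmenting (reassign W z yb ys) k x'"
    using Suc.IH[OF x'] by blast
  have "x' \<noteq> z" using z(1) \<open>\<And>i. i \<le> k \<Longrightarrow> \<not> augmenting W i x'\<close> by blast
  then have "reassign W z yb ys x' y = W x' y" by (rule reassign_other_row)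
  then have "augmenting (reassign W z yb ys) (Suc k) x"
    using xy x'y z(4) by (metis augmenting.simps(2))
  then show ?case using z by blast
qed

lemma finite_avail: "finite (avail X E \<beta> W x)"
  using avail_subset finite_units by (rule finite_subset)

lemma set_pmf_gibbs:
  assumes "avail X E \<beta> W x \<noteq> {}"
  shows "set_pmf (gibbs X E \<beta> lam kc ka \<gamma> W x) = avail X E \<beta> W x"
proof -
  let ?B = "avail X E \<beta> W x"
  let ?w = "\<lambda>y. exp (\<gamma> * fit X \<beta> lam kc ka (mat_add W (unit_mat x y)) x y)"
  have pos: "0 < sum ?w ?B" using assms finite_avail by (intro sum_pos) auto
  have "(\<Sum>y\<in>?B. if y \<in> ?B then ?w y / sum ?w ?B else 0) = (\<Sum>y\<in>?B. ?w y / sum ?w ?B)"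
    by (rule sum.cong) auto
  also have "\<dots> = 1" using pos by (simp add: sum_divide_distrib[symmetric])
  finally have "set_pmf (gibbs X E \<beta> lam kc ka \<gamma> W x) =
      {y. (if y \<in> ?B then ?w y / sum ?w ?B else 0) \<noteq> 0}"
    unfolding gibbs_def using pos by (intro set_pmf_embed_pmf_finite[OF finite_avail]) auto
  also have "\<dots> = ?B" using pos by auto
  finally show ?thesis .
qed

lemma set_pmf_alloc_move:
  "set_pmf (alloc_move X E \<beta> lam kc ka \<gamma> W x) =
    (if avail X E \<beta> W x = {} then {W} else (\<lambda>y. mat_add W (unit_mat x y)) ` avail X E \<beta> W x)"
  by (simp add: alloc_move_def set_pmf_gibbs)

lemma set_pmf_dist_move:
  assumes W: "W \<in> PS" and busy: "0 < row_sum X W x"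
  shows "set_pmf (dist_move X E \<beta> lam kc ka \<gamma> W x) =
    (\<Union>yb\<in>{yb. 0 < W x yb}. let W' = mat_sub W (unit_mat x yb) in
      if avail X E \<beta> W' x = {} then {W} else reassign W x yb ` avail X E \<beta> W' x)"
proof -
  let ?p = "\<lambda>yb. real (W x yb) / real (row_sum X W x)"
  have "set_pmf (embed_pmf ?p) = {yb. ?p yb \<noteq> 0}"
  proof (rule set_pmf_embed_pmf_finite[OF finite_units])
    show "yb \<notin> X \<Longrightarrow> real (W x yb) / real (row_sum X W x) = 0" for yb
      using partial_state_units[OF W, of x yb] by (cases "W x yb = 0") auto
    show "(\<Sum>yb\<in>X. real (W x yb) / real (row_sum X W x)) = 1"
      using busy by (simp add: sum_divide_distrib[symmetric] row_sum_def flip: of_nat_sum)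
  qed auto
  also have "\<dots> = {yb. 0 < W x yb}" using busy by auto
  finally have choice: "set_pmf (embed_pmf ?p) = {yb. 0 < W x yb}" .
  show ?thesis
    unfolding dist_move_def set_bind_pmf
    by (intro SUP_cong) (simp_all add: choice Let_def set_pmf_gibbs reassign_def)
qed

end

locale allocation_process = capacity_graph X E \<alpha> \<beta>
  for X :: "'x set" and E \<alpha> \<beta> +
  fixes lam :: "'x \<Rightarrow> real" and kc ka \<gamma> :: real and \<nu> :: "'x \<Rightarrow> real"
    and Pall Pdis :: "'x mat \<Rightarrow> 'x \<Rightarrow> real"
  assumes rate_nonneg: "\<forall>x\<in>X. \<nu> x \<ge> 0"
    and P_nonneg: "\<forall>W\<in>partial_states X E \<alpha> \<beta>. \<forall>x\<in>X. Pall W x \<ge> 0 \<and> Pdis W x \<ge> 0"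
    and P_sum: "\<forall>W\<in>partial_states X E \<alpha> \<beta>. \<forall>x\<in>X. Pall W x + Pdis W x = 1"
    and Pall_full: "\<forall>W\<in>partial_states X E \<alpha> \<beta>. \<forall>x\<in>X. row_sum X W x = \<alpha> x \<longrightarrow> Pall W x = 0"
    and Pdis_empty: "\<forall>W\<in>partial_states X E \<alpha> \<beta>. \<forall>x\<in>X. row_sum X W x = 0 \<longrightarrow> Pdis W x = 0"
    and rate_pos: "\<forall>x\<in>X. \<alpha> x > 0 \<longrightarrow> \<nu> x > 0"
    and Pall_pos: "\<forall>W\<in>partial_states X E \<alpha> \<beta>. \<forall>x\<in>X. row_sum X W x < \<alpha> x \<longrightarrow> Pall W x > 0"
begin

abbreviation "K \<equiv> step X E \<beta> lam kc ka \<gamma> Pall \<nu>"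

lemma unsaturated_if_Pall_pos: "W \<in> PS \<Longrightarrow> x \<in> X \<Longrightarrow> 0 < Pall W x \<Longrightarrow> row_sum X W x < \<alpha> x"
  using Pall_full partial_state_row_le by force

lemma busy_if_Pall_less_1: "W \<in> PS \<Longrightarrow> x \<in> X \<Longrightarrow> Pall W x < 1 \<Longrightarrow> 0 < row_sum X W x"
  using P_sum Pdis_empty by force

lemma set_pmf_activation:
  assumes "W \<in> PS" "x \<in> X"
  shows "set_pmf (activation X E \<beta> lam kc ka \<gamma> Pall W x) =
    (if 0 < Pall W x then set_pmf (alloc_move X E \<beta> lam kc ka \<gamma> W x) else {}) \<union>
    (if Pall W x < 1 then set_pmf (dist_move X E \<beta> lam kc ka \<gamma> W x) else {})"
proof -
  have "0 \<le> Pall W x" "0 \<le> Pdis W x" "Pall W x + Pdis W x = 1"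
    using assms P_nonneg P_sum by auto
  then have "0 \<le> Pall W x" "Pall W x \<le> 1" by linarith+
  then show ?thesis by (simp add: activation_def set_pmf_bernoulli_pmf)
qed

lemma set_pmf_step:
  "set_pmf (K W) = (if (\<Sum>x\<in>X. \<nu> x) = 0 then {W}
    else \<Union>x\<in>{x\<in>X. 0 < \<nu> x}. set_pmf (activation X E \<beta> lam kc ka \<gamma> Pall W x))"
proof (cases "(\<Sum>x\<in>X. \<nu> x) = 0")
  case False
  then have pos: "0 < (\<Sum>x\<in>X. \<nu> x)" using rate_nonneg by (simp add: sum_nonneg order_le_neq_trans)
  have "set_pmf (embed_pmf (\<lambda>x. if x \<in> X then \<nu> x / (\<Sum>x'\<in>X. \<nu> x') else 0)) =
      {x. (if x \<in> X then \<nu> x / (\<Sum>x'\<in>X. \<nu> x') else 0) \<noteq> 0}"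
    using pos rate_nonneg
    by (intro set_pmf_embed_pmf_finite[OF finite_units]) (auto simp: sum_divide_distrib[symmetric])
  also have "\<dots> = {x\<in>X. 0 < \<nu> x}" using pos rate_nonneg by (auto simp: order_less_le)
  finally show ?thesis using False by (simp add: step_def)
qed (simp add: step_def)

lemma step_partial_states: "W \<in> PS \<Longrightarrow> set_pmf (K W) \<subseteq> PS"
proof
  fix W' assume W: "W \<in> PS" and "W' \<in> set_pmf (K W)"
  then consider "W' = W" | x where "x \<in> X" "W' \<in> set_pmf (activation X E \<beta> lam kc ka \<gamma> Pall W x)"
    by (auto simp: set_pmf_step split: if_splits)
  then show "W' \<in> PS"
  proof cases
    case (2 x)
    then consider
        "0 < Pall W x" "W' \<in> set_pmf (alloc_move X E \<beta> lam kc ka \<gamma> W x)"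
      | "Pall W x < 1" "W' \<in> set_pmf (dist_move X E \<beta> lam kc ka \<gamma> W x)"
      using set_pmf_activation[OF W] by (auto split: if_splits)
    then show ?thesis
    proof cases
      case 1
      then show ?thesis
        using add_unit_partial_state[OF W \<open>x \<in> X\<close>] unsaturated_if_Pall_pos[OF W \<open>x \<in> X\<close>]
        by (auto simp: set_pmf_alloc_move W split: if_splits)
    next
      case 2
      then obtain yb where yb: "0 < W x yb" and
        "W' \<in> (let W1 = mat_sub W (unit_mat x yb) in
           if avail X E \<beta> W1 x = {} then {W} else reassign W x yb ` avail X E \<beta> W1 x)"
        using set_pmf_dist_move[OF W busy_if_Pall_less_1[OF W \<open>x \<in> X\<close>]] by auto
      then show ?thesis
        using add_unit_partial_state[OF sub_unit_partial_state(1)[OF W yb] \<open>x \<in> X\<close>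
            sub_unit_partial_state(2)[OF W yb]] W
        by (auto simp: Let_def reassign_def split: if_splits)
    qed
  qed (use W in simp)
qed

lemma activation_in_step:
  assumes "x \<in> X" "0 < \<nu> x" "W' \<in> set_pmf (activation X E \<beta> lam kc ka \<gamma> Pall W x)"
  shows "W' \<in> set_pmf (K W)"
proof -
  have "(\<Sum>x\<in>X. \<nu> x) \<noteq> 0"
    using assms(1,2) rate_nonneg finite_units by (metis less_irrefl sum_pos2)
  then show ?thesis using assms by (auto simp: set_pmf_step)
qed

lemma allocation_in_step:
  assumes W: "W \<in> PS" and x: "x \<in> X" "row_sum X W x < \<alpha> x" and y: "y \<in> avail X E \<beta> W x"
  shows "mat_add W (unit_mat x y) \<in> set_pmf (K W)"
proof (rule activation_in_step)
  show "0 < \<nu> x" using rate_pos x by auto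
  have "0 < Pall W x" using Pall_pos W x by auto
  then show "mat_add W (unit_mat x y) \<in> set_pmf (activation X E \<beta> lam kc ka \<gamma> Pall W x)"
    using y by (auto simp: set_pmf_activation[OF W x(1)] set_pmf_alloc_move)
qed (use x in simp)

lemma reassignment_in_step:
  assumes W: "W \<in> PS" and z: "row_sum X W z = \<alpha> z" and yb: "0 < W z yb"
    and ys: "ys \<in> avail X E \<beta> (mat_sub W (unit_mat z yb)) z"
  shows "reassign W z yb ys \<in> set_pmf (K W)"
proof (rule activation_in_step)
  show "z \<in> X" using partial_state_units[OF W yb] by blast
  have "yb \<in> X" using partial_state_units[OF W yb] by blast
  then have busy: "0 < row_sum X W z" using yb entry_le_row_sum[of yb W z] by linarith
  then show "0 < \<nu> z" using rate_pos z \<open>z \<in> X\<close> by auto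
  have "Pall W z = 0" using Pall_full W z \<open>z \<in> X\<close> by auto
  moreover have "reassign W z yb ys \<in> set_pmf (dist_move X E \<beta> lam kc ka \<gamma> W z)"
    using yb ys by (auto simp: set_pmf_dist_move[OF W busy] Let_def)
  ultimately show "reassign W z yb ys \<in> set_pmf (activation X E \<beta> lam kc ka \<gamma> Pall W z)"
    by (simp add: set_pmf_activation[OF W \<open>z \<in> X\<close>])
qed

abbreviation "R \<equiv> transitions K PS AS"

lemma shortest_augmenting_path_step:
  assumes W: "W \<in> PS" and path: "augmenting W (Suc j) x0"
    and shortest: "\<forall>i\<le>j. \<not> augmenting W i x0"
    and ends_saturated: "\<And>z. augmenting W 0 z \<Longrightarrow> row_sum X W z = \<alpha> z"
  shows "\<exists>W'\<in>set_pmf (K W). (\<forall>a. row_sum X W' a = row_sum X W a) \<and> augmenting W' j x0"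
proof -
  obtain z yb ys where z: "augmenting W 0 z" "0 < W z yb"
      "ys \<in> avail X E \<beta> (mat_sub W (unit_mat z yb)) z" "augmenting (reassign W z yb ys) j x0"
    using augmenting_reassign_shorter[OF W path shortest] by blast
  have "yb \<in> X" using partial_state_units[OF W z(2)] by blast
  moreover have "ys \<in> X" using z(3) avail_subset by blast
  ultimately have "row_sum X (reassign W z yb ys) a = row_sum X W a" for a
    by (simp add: row_sum_reassign finite_units z(2))
  moreover have "reassign W z yb ys \<in> set_pmf (K W)"
    using reassignment_in_step[OF W ends_saturated[OF z(1)] z(2,3)] .
  ultimately show ?thesis using z(4) by blast
qed

text \<open>Induction on the length \<open>m\<close> of a shortest augmenting path from an unsaturated unit. For
  \<open>m = 0\<close> an allocation move lowers the deficit. Otherwise every unit next to free capacity is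
  saturated (else \<open>m = 0\<close>), so it performs distribution moves, and one of them shortens the
  path without changing any row sum.\<close>

lemma deficit_decreases_reachably:
  assumes "W \<in> PS" "x0 \<in> X" "row_sum X W x0 < \<alpha> x0" "augmenting W m x0"
  shows "\<exists>W'. (W, W') \<in> R\<^sup>* \<and> W' \<in> PS \<and> deficit W' < deficit W"
  using assms
proof (induction m arbitrary: W x0 rule: less_induct)
  case (less m W x0)
  note W = less.prems(1) and x0 = less.prems(2,3)
  have step_R: "(W, W') \<in> R" if "W' \<in> set_pmf (K W)" for W'
    using that W x0 not_alloc_state_iff by (auto simp: transitions_def)
  consider (shorter) x i where "x \<in> X" "row_sum X W x < \<alpha> x" "i < m" "augmenting W i x"
    | (shortest) "\<And>x i. x \<in> X \<Longrightarrow> row_sum X W x < \<alpha> x \<Longrightarrow> i < m \<Longrightarrow> \<not> augmenting W i x"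
    by blast
  then show ?case
  proof cases
    case shorter
    then show ?thesis using less.IH W by blast
  next
    case shortest
    show ?thesis
    proof (cases m)
      case 0
      then obtain y where y: "y \<in> avail X E \<beta> W x0" using less.prems(4) by auto
      show ?thesis
        using allocation_in_step[OF W x0 y] step_R
          add_unit_partial_state[OF W x0 y] deficit_add_unit_less[OF x0 y]
        by blast
    next
      case (Suc j)
      have "row_sum X W z = \<alpha> z" if "augmenting W 0 z" for z
        using shortest[of z 0] that Suc partial_state_row_le[OF W, of z] by fastforce
      moreover have "\<forall>i\<le>j. \<not> augmenting W i x0" using shortest x0 Suc by auto
      ultimately obtain W' where W': "W' \<in> set_pmf (K W)"
          "\<forall>a. row_sum X W' a = row_sum X W a" "augmenting W' j x0"
        using shortest_augmenting_path_step[OF W] less.prems(4) Suc by blast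
      then have "W' \<in> PS" using step_partial_states[OF W] by blast
      then obtain W'' where W'': "(W', W'') \<in> R\<^sup>*" "W'' \<in> PS" "deficit W'' < deficit W'"
        using less.IH[of j W' x0] Suc W' x0 by auto
      have "(W, W'') \<in> R\<^sup>*" using step_R[OF W'(1)] W''(1) by (rule converse_rtrancl_into_rtrancl)
      moreover have "deficit W' = deficit W" using W'(2) by (simp add: deficit_def)
      ultimately show ?thesis using W'' by auto
    qed
  qed
qed

lemma alloc_state_reachable:
  assumes hall: "\<forall>D\<subseteq>X. (\<Sum>x\<in>D. \<alpha> x) \<le> (\<Sum>y\<in>nbhd E D. \<beta> y)"
  shows "W \<in> PS \<Longrightarrow> \<exists>W'\<in>AS. (W, W') \<in> R\<^sup>*"
proof (induction "deficit W" arbitrary: W rule: less_induct)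
  case less
  show ?case
  proof (cases "W \<in> AS")
    case False
    then obtain x0 where x0: "x0 \<in> X" "row_sum X W x0 < \<alpha> x0"
      using not_alloc_state_iff[OF less.prems] by blast
    then obtain k where "augmenting W k x0" using augmenting_path_exists[OF hall less.prems] by blast
    then obtain W' where "(W, W') \<in> R\<^sup>*" "W' \<in> PS" "deficit W' < deficit W"
      using deficit_decreases_reachably[OF less.prems x0] by blast
    then show ?thesis using less.hyps by (meson rtrancl_trans)
  qed blast
qed

end

theorem theorem2:
  fixes X :: "'x set" and E :: "('x \<times> 'x) set"
    and \<alpha> \<beta> :: "'x \<Rightarrow> nat"
    and lam :: "'x \<Rightarrow> real" and kc ka \<gamma> :: real
    and \<nu> :: "'x \<Rightarrow> real"
    and Pall Pdis :: "'x mat \<Rightarrow> 'x \<Rightarrow> real"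
    and W0 :: "'x mat"
  assumes fin: "finite X"
    and graph: "E \<subseteq> X \<times> X"
    and kc: "kc \<ge> 0" and ka: "ka \<ge> 0" and \<gamma>: "\<gamma> > 0"
    and \<nu>_nonneg: "\<forall>x\<in>X. \<nu> x \<ge> 0"
    and P_nonneg: "\<forall>W\<in>partial_states X E \<alpha> \<beta>. \<forall>x\<in>X. Pall W x \<ge> 0 \<and> Pdis W x \<ge> 0"
    and P_sum: "\<forall>W\<in>partial_states X E \<alpha> \<beta>. \<forall>x\<in>X. Pall W x + Pdis W x = 1"
    and Pall_full: "\<forall>W\<in>partial_states X E \<alpha> \<beta>. \<forall>x\<in>X. row_sum X W x = \<alpha> x \<longrightarrow> Pall W x = 0"
    and Pdis_empty: "\<forall>W\<in>partial_states X E \<alpha> \<beta>. \<forall>x\<in>X. row_sum X W x = 0 \<longrightarrow> Pdis W x = 0"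
    and h1: "\<forall>x\<in>X. \<alpha> x > 0 \<longrightarrow> \<nu> x > 0"
    and h2: "\<forall>W\<in>partial_states X E \<alpha> \<beta>. \<forall>x\<in>X. row_sum X W x < \<alpha> x \<longrightarrow> Pall W x > 0"
    and h3: "\<forall>D\<subseteq>X. (\<Sum>x\<in>D. \<alpha> x) \<le> (\<Sum>y\<in>nbhd E D. \<beta> y)"
    and init: "W0 \<in> partial_states X E \<alpha> \<beta>"
  shows "(\<lambda>n. measure_pmf.prob
            (stopped_dist (step X E \<beta> lam kc ka \<gamma> Pall \<nu>) (alloc_states X E \<alpha> \<beta>) W0 n)
            (alloc_states X E \<alpha> \<beta>)) \<longlonglongrightarrow> 1"
proof -
  interpret allocation_process X E \<alpha> \<beta> lam kc ka \<gamma> \<nu> Pall Pdis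
    by unfold_locales (fact fin graph \<nu>_nonneg P_nonneg P_sum Pall_full Pdis_empty h1 h2)+
  have "hitting_prob K AS W0 \<longlonglongrightarrow> 1"
    by (rule hitting_prob_tendsto_1[OF finite_partial_states init])
      (use step_partial_states alloc_state_reachable[OF h3] in auto)
  then show ?thesis unfolding hitting_prob_def .
qed

end
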